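(* For every condition $(\tau,Q,a)$ and every c.e. set $D\subseteq\omega\times\omega$ with $\mathrm{wt}(D)<\infty$, there exists a condition $(\tau,Q',a')$ (with the same first component $\tau$) extending $(\tau,Q,a)$ such that $D\subseteq^* Y$ (i.e. $D\setminus Y$ is finite) for every $Y$ in the set of candidates $(\tau,Q',a')$.
   Context: Fix a computable bijection between $\omega\times\omega$ and $\omega$, so that subsets of $\omega\times\omega$ are identified with elements of $2^\omega$ and strings $\rho\in 2^{<\omega}$ with finite subsets of $\omega\times\omega$; thus $X\upharpoonright_n$, $\rho\supseteq\sigma$, $\rho\setminus X$ etc. make sense. For $X\subseteq\omega\times\omega$, $\mathrm{wt}(X)=\sum_{(n,m)\in X}2^{-n}$; for a class $\hat Q\subseteq 2^\omega$, $\mathrm{wt}(\hat Q)=\inf_{X\in\hat Q}\mathrm{wt}(X)$, and $\mathrm{wt}(\emptyset)=\infty$. A condition is a tuple $(\tau,Q,a)$ where $\tau\in 2^{<\omega}$, $Q\subseteq 2^\omega$ is a $\Pi^0_1$ class with $\mathrm{wt}(Q)<\infty$, $a$ is a computable real, and for every $X\in Q$, $\tau\supseteq X\upharpoonright_{|\tau|}$ (as sets) and $\mathrm{wt}(\tau\setminus X)<a$. The condition $(\tau,Q,a)$ also denotes its set of candidates $\{Y\in 2^\omega: Y\succ\tau,\ \exists X\in Q\ (Y\supseteq X\text{ and }\mathrm{wt}(Y\setminus X)\le a)\}$. A condition $(\tau',Q',a')$ extends $(\tau,Q,a)$ if $(\tau',Q',a')\subseteq(\tau,Q,a)$ as sets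 of candidates. *)

theory Defs
  imports Complex_Main "HOL-Library.Nat_Bijection" "HOL-Library.Extended_Nonnegative_Real"
begin

datatype recf = Zero | Succ | Proj nat | Comp recf "recf list" | Prec recf recf | Minim recf

inductive evalr :: "recf \<Rightarrow> nat list \<Rightarrow> nat \<Rightarrow> bool" where
  ev_zero: "evalr Zero xs 0"
| ev_succ: "evalr Succ (x # xs) (Suc x)"
| ev_proj: "i < length xs \<Longrightarrow> evalr (Proj i) xs (xs ! i)"
| ev_comp: "list_all2 (\<lambda>g y. evalr g xs y) gs ys \<Longrightarrow> evalr f ys z \<Longrightarrow> evalr (Comp f gs) xs z"
| ev_prec0: "evalr f xs y \<Longrightarrow> evalr (Prec f g) (0 # xs) y"
| ev_precS: "evalr (Prec f g) (n # xs) y \<Longrightarrow> evalr g (y # n # xs) z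
             \<Longrightarrow> evalr (Prec f g) (Suc n # xs) z"
| ev_minim: "evalr f (y # xs) 0 \<Longrightarrow> (\<forall>k<y. \<exists>v. evalr f (k # xs) v \<and> 0 < v)
             \<Longrightarrow> evalr (Minim f) xs y"

definition computable :: "(nat \<Rightarrow> nat) \<Rightarrow> bool" where
  "computable f \<longleftrightarrow> (\<exists>p. \<forall>n. evalr p [n] (f n))"

definition ce :: "nat set \<Rightarrow> bool" where
  "ce A \<longleftrightarrow> (\<exists>p. \<forall>n. n \<in> A \<longleftrightarrow> (\<exists>v. evalr p [n] v))"

definition decidable_set :: "nat set \<Rightarrow> bool" where
  "decidable_set R \<longleftrightarrow> computable (\<lambda>k. if k \<in> R then 1 else 0)"

text \<open>Elements of 2^omega are sets of naturals; strings are bool lists.\<close>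
definition prefix_of :: "nat set \<Rightarrow> nat \<Rightarrow> bool list" where
  "prefix_of X n = map (\<lambda>i. i \<in> X) [0..<n]"

text \<open>Injective coding of binary strings by naturals (binary with a leading 1).\<close>
definition str_code :: "bool list \<Rightarrow> nat" where
  "str_code bs = foldr (\<lambda>b acc. (if b then 1 else 0) + 2 * acc) bs 1"

definition Pi01_class :: "nat set set \<Rightarrow> bool" where
  "Pi01_class Q \<longleftrightarrow> (\<exists>R. decidable_set R \<and> Q = {X. \<forall>n. str_code (prefix_of X n) \<in> R})"

definition computable_real :: "real \<Rightarrow> bool" where
  "computable_real a \<longleftrightarrow> (\<exists>f g h. computable f \<and> computable g \<and> computable h \<and>
     (\<forall>n. \<bar>a - (real (f n) - real (g n)) / real (h n + 1)\<bar> \<le> 1 / 2 ^ n))"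

definition strset :: "bool list \<Rightarrow> nat set" where
  "strset \<tau> = {i. i < length \<tau> \<and> \<tau> ! i}"

definition extends_str :: "nat set \<Rightarrow> bool list \<Rightarrow> bool" where
  "extends_str Y \<tau> \<longleftrightarrow> (\<forall>i<length \<tau>. (i \<in> Y) = \<tau> ! i)"

text \<open>The fixed computable bijection omega x omega -> omega is Cantor pairing
  prod_encode; the code k stands for the pair prod_decode k = (n,m).\<close>
definition wt :: "nat set \<Rightarrow> ennreal" where
  "wt X = (\<Sum>k. if k \<in> X then ennreal ((1/2) ^ fst (prod_decode k)) else 0)"

definition wt_class :: "nat set set \<Rightarrow> ennreal" where
  "wt_class Q = (INF X\<in>Q. wt X)"

definition is_condition :: "bool list \<Rightarrow> nat set set \<Rightarrow> real \<Rightarrow> bool" where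
  "is_condition \<tau> Q a \<longleftrightarrow> Pi01_class Q \<and> wt_class Q < \<infinity> \<and> computable_real a \<and>
     (\<forall>X\<in>Q. X \<inter> {..<length \<tau>} \<subseteq> strset \<tau> \<and> enn2ereal (wt (strset \<tau> - X)) < ereal a)"

definition candidates :: "bool list \<Rightarrow> nat set set \<Rightarrow> real \<Rightarrow> nat set set" where
  "candidates \<tau> Q a = {Y. extends_str Y \<tau> \<and>
     (\<exists>X\<in>Q. X \<subseteq> Y \<and> enn2ereal (wt (Y - X)) \<le> ereal a)}"

end

theory Submission
  imports Defs "HOL-Library.Discrete_Functions"
begin

(* Write Q as the set of paths through a decidable tree R and let T = strset tau. As T is finite,
   wt (T - X) takes only finitely many values for X in Q, all below a; so some delta = 2^-J has
   wt (T - X) + delta < a throughout Q. As wt D is finite, some tail D' = D \<inter> {K..} with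
   K >= |tau| has weight at most delta. The new condition is (tau, Q', a - delta), where Q' consists
   of the Z that add nothing to tau below |tau|, contain D', and exceed some X in Q by weight at
   most delta. A candidate Y above Z above X then has wt (Y - X) <= (a - delta) + delta and misses
   only elements of D below K. Q' is Pi01: containing D' is, because halting within s steps is
   decidable, and by Koenig's lemma Z lies in the weight hull of Q iff for every n some string of
   length n in R is contained in Z with light complement in Z \<inter> {..<n}. *)

section \<open>Total recursive functions of fixed arity\<close>

definition recursive :: "nat \<Rightarrow> (nat list \<Rightarrow> nat) \<Rightarrow> bool" where
  "recursive k f \<longleftrightarrow> (\<exists>p. \<forall>xs. length xs = k \<longrightarrow> evalr p xs (f xs))"

lemma recursive_cong:
  "recursive k f \<Longrightarrow> (\<And>xs. length xs = k \<Longrightarrow> f xs = g xs) \<Longrightarrow> recursive k g"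
  unfolding recursive_def by metis

lemma recursive_zero: "recursive k (\<lambda>_. 0)"
  unfolding recursive_def by (auto intro: evalr.intros)

lemma recursive_nth: "j < k \<Longrightarrow> recursive k (\<lambda>xs. xs ! j)"
  unfolding recursive_def by (rule exI[of _ "Proj j"]) (auto intro: evalr.intros)

lemma recursive_comp:
  assumes "recursive m f" and "\<forall>g\<in>set gs. recursive k g" and "length gs = m"
  shows "recursive k (\<lambda>xs. f (map (\<lambda>g. g xs) gs))"
proof -
  have "\<exists>ps. \<forall>xs. length xs = k \<longrightarrow> list_all2 (\<lambda>p y. evalr p xs y) ps (map (\<lambda>g. g xs) gs)"
    using assms(2)
  proof (induction gs)
    case (Cons g gs)
    then obtain ps where "\<forall>xs. length xs = k \<longrightarrow> list_all2 (\<lambda>p y. evalr p xs y) ps (map (\<lambda>g. g xs) gs)"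
      by auto
    moreover obtain q where "\<forall>xs. length xs = k \<longrightarrow> evalr q xs (g xs)"
      using Cons.prems unfolding recursive_def by auto
    ultimately show ?case by (intro exI[of _ "q # ps"]) simp
  qed simp
  then obtain ps where ps: "\<forall>xs. length xs = k \<longrightarrow> list_all2 (\<lambda>p y. evalr p xs y) ps (map (\<lambda>g. g xs) gs)"
    by blast
  obtain q where q: "\<forall>xs. length xs = m \<longrightarrow> evalr q xs (f xs)"
    using assms(1) unfolding recursive_def by auto
  have "evalr (Comp q ps) xs (f (map (\<lambda>g. g xs) gs))" if "length xs = k" for xs
    using ps q assms(3) that by (intro evalr.ev_comp[where ys="map (\<lambda>g. g xs) gs"]) auto
  then show ?thesis unfolding recursive_def by blast
qed

lemma recursive_Suc: "recursive k f \<Longrightarrow> recursive k (\<lambda>xs. Suc (f xs))"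
proof -
  assume "recursive k f"
  moreover have "recursive 1 (\<lambda>xs. Suc (hd xs))"
    unfolding recursive_def
    by (rule exI[of _ Succ]) (auto simp: length_Suc_conv intro: evalr.ev_succ)
  ultimately show ?thesis using recursive_comp[of 1 "\<lambda>xs. Suc (hd xs)" "[f]"] by simp
qed

lemma recursive_prec:
  assumes "recursive k f" and "recursive (Suc (Suc k)) g"
  shows "recursive (Suc k) (\<lambda>xs. rec_nat (f (tl xs)) (\<lambda>n y. g (y # n # tl xs)) (hd xs))"
proof -
  obtain p where p: "\<forall>xs. length xs = k \<longrightarrow> evalr p xs (f xs)"
    using assms(1) unfolding recursive_def by auto
  obtain q where q: "\<forall>xs. length xs = Suc (Suc k) \<longrightarrow> evalr q xs (g xs)"
    using assms(2) unfolding recursive_def by auto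
  have "evalr (Prec p q) (n # ys) (rec_nat (f ys) (\<lambda>n y. g (y # n # ys)) n)" if "length ys = k" for n ys
    by (induction n) (use p q that in \<open>auto intro: evalr.intros\<close>)
  then show ?thesis unfolding recursive_def
    by (intro exI[of _ "Prec p q"]) (auto simp: length_Suc_conv)
qed

definition recursive_vec :: "nat \<Rightarrow> nat \<Rightarrow> (nat list \<Rightarrow> nat list) \<Rightarrow> bool" where
  "recursive_vec k m F \<longleftrightarrow>
     (\<forall>xs. length xs = k \<longrightarrow> length (F xs) = m) \<and> (\<forall>j<m. recursive k (\<lambda>xs. F xs ! j))"

lemma recursive_compose:
  assumes "recursive m f" and "recursive_vec k m F"
  shows "recursive k (\<lambda>xs. f (F xs))"
proof -
  have "recursive k (\<lambda>xs. f (map (\<lambda>g. g xs) (map (\<lambda>j xs. F xs ! j) [0..<m])))"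
    using assms by (intro recursive_comp) (auto simp: recursive_vec_def)
  then show ?thesis
  proof (rule recursive_cong)
    fix xs :: "nat list" assume "length xs = k"
    then have "length (F xs) = m" using assms(2) by (auto simp: recursive_vec_def)
    then show "f (map (\<lambda>g. g xs) (map (\<lambda>j xs. F xs ! j) [0..<m])) = f (F xs)"
      by (simp add: comp_def) (metis map_nth)
  qed
qed

(* recursive_compose with the arity as a separate equation, so that it can be used as an
   introduction rule when the arity of F is not syntactically that of f *)
lemma recursive_compose':
  "recursive m f \<Longrightarrow> recursive_vec k m' F \<Longrightarrow> m' = m \<Longrightarrow> recursive k (\<lambda>xs. f (F xs))"
  using recursive_compose by blast

lemma recursive_vec_id: "recursive_vec k k (\<lambda>xs. xs)"
  unfolding recursive_vec_def by (auto intro: recursive_nth)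

lemma recursive_vec_Nil: "recursive_vec k 0 (\<lambda>_. [])"
  unfolding recursive_vec_def by auto

lemma recursive_vec_Cons:
  "recursive k g \<Longrightarrow> recursive_vec k m F \<Longrightarrow> recursive_vec k (Suc m) (\<lambda>xs. g xs # F xs)"
  unfolding recursive_vec_def by (auto simp: less_Suc_eq_0_disj)

lemma recursive_vec_tl: "recursive_vec k (Suc m) F \<Longrightarrow> recursive_vec k m (\<lambda>xs. tl (F xs))"
  unfolding recursive_vec_def
proof (intro conjI allI impI; elim conjE)
  fix j assume F: "\<forall>j<Suc m. recursive k (\<lambda>xs. F xs ! j)"
    "\<forall>xs. length xs = k \<longrightarrow> length (F xs) = Suc m" and "j < m"
  then have "recursive k (\<lambda>xs. F xs ! Suc j)" by auto
  then show "recursive k (\<lambda>xs. tl (F xs) ! j)"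
    by (rule recursive_cong) (use F \<open>j < m\<close> in \<open>auto simp: nth_tl\<close>)
qed auto

lemma recursive_vec_nth: "recursive_vec k m F \<Longrightarrow> j < m \<Longrightarrow> recursive k (\<lambda>xs. F xs ! j)"
  unfolding recursive_vec_def by auto

lemma recursive_vec_hd: "recursive_vec k m F \<Longrightarrow> 0 < m \<Longrightarrow> recursive k (\<lambda>xs. hd (F xs))"
  unfolding recursive_vec_def
  by (rule recursive_cong[of _ "\<lambda>xs. F xs ! 0"]) (auto simp: hd_conv_nth)

lemma recursive_hd: "0 < k \<Longrightarrow> recursive k hd"
  using recursive_vec_hd[OF recursive_vec_id[of k]] by simp

lemma recursive_vec_tl_id: "recursive_vec (Suc k) k tl"
  using recursive_vec_tl[OF recursive_vec_id[of "Suc k"]] by simp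

lemma recursive_tl: "recursive k f \<Longrightarrow> recursive (Suc k) (\<lambda>xs. f (tl xs))"
  using recursive_compose'[OF _ recursive_vec_tl_id[of k]] by simp

lemma recursive_const: "recursive k (\<lambda>_. c)"
  by (induction c) (auto intro: recursive_zero recursive_Suc)

lemma recursive_op1:
  "recursive 1 (\<lambda>ys. h (ys ! 0)) \<Longrightarrow> recursive k f \<Longrightarrow> recursive k (\<lambda>xs. h (f xs))"
  using recursive_compose[of 1 "\<lambda>ys. h (ys ! 0)" k "\<lambda>xs. [f xs]"]
  by (simp add: recursive_vec_Cons recursive_vec_Nil)

lemma recursive_op2:
  "recursive 2 (\<lambda>ys. h (ys ! 0) (ys ! 1)) \<Longrightarrow> recursive k f \<Longrightarrow> recursive k g \<Longrightarrow>
   recursive k (\<lambda>xs. h (f xs) (g xs))"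
  using recursive_compose[of 2 "\<lambda>ys. h (ys ! 0) (ys ! 1)" k "\<lambda>xs. [f xs, g xs]"]
  by (simp add: recursive_vec_Cons recursive_vec_Nil numeral_2_eq_2)

lemma recursive_prec1:
  assumes "recursive 0 f" and "recursive 2 g"
  shows "recursive 1 (\<lambda>xs. rec_nat (f []) (\<lambda>n y. g [y, n]) (xs ! 0))"
  using recursive_prec[of 0 f g] assms
  by (simp add: numeral_2_eq_2) (rule recursive_cong, assumption, auto simp: length_Suc_conv)

lemma recursive_prec2:
  assumes "recursive 1 f" and "recursive 3 g"
  shows "recursive 2 (\<lambda>xs. rec_nat (f [xs ! 1]) (\<lambda>n y. g [y, n, xs ! 1]) (xs ! 0))"
  using recursive_prec[of 1 f g] assms
  by (simp add: numeral_3_eq_3 numeral_2_eq_2)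
     (rule recursive_cong, assumption, auto simp: length_Suc_conv)

lemma rec_nat_add: "rec_nat b (\<lambda>n y. Suc y) a = a + (b::nat)"
  by (induction a) auto

lemma rec_nat_mult: "rec_nat 0 (\<lambda>n y. y + b) a = a * (b::nat)"
  by (induction a) auto

lemma rec_nat_pred: "rec_nat 0 (\<lambda>n y. n) a = a - (1::nat)"
  by (induction a) auto

lemma rec_nat_diff: "rec_nat b (\<lambda>n y. y - Suc 0) a = b - (a::nat)"
  by (induction a) auto

lemma rec_nat_power2: "rec_nat (Suc 0) (\<lambda>n y. y + y) a = (2::nat) ^ a"
  by (induction a) auto

lemma rec_nat_triangle: "rec_nat 0 (\<lambda>n y. Suc (y + n)) a = triangle a"
  by (induction a) auto

lemma rec_nat_sgn: "rec_nat 0 (\<lambda>n y. Suc 0) a = (of_bool (0 < a) :: nat)"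
  by (cases a) auto

lemma rec_nat_mod: "rec_nat 0 (\<lambda>n y. if Suc y = m then 0 else Suc y) a = a mod (m::nat)"
  by (induction a) (auto simp: mod_Suc)

lemma rec_nat_sum: "rec_nat 0 (\<lambda>n y. y + h n) m = (\<Sum>i<m. h i :: nat)"
  by (induction m) auto

lemma recursive_add:
  assumes "recursive k f" and "recursive k g"
  shows "recursive k (\<lambda>xs. f xs + g xs)"
proof (rule recursive_op2[OF _ assms])
  show "recursive 2 (\<lambda>ys. ys ! 0 + ys ! 1)"
    using recursive_prec2[OF recursive_nth[of 0 1] recursive_Suc[OF recursive_nth[of 0 3]]]
    by (rule recursive_cong) (auto simp: rec_nat_add length_Suc_conv numeral_2_eq_2)
qed

lemma recursive_mult:
  assumes "recursive k f" and "recursive k g"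
  shows "recursive k (\<lambda>xs. f xs * g xs)"
proof (rule recursive_op2[OF _ assms])
  show "recursive 2 (\<lambda>ys. ys ! 0 * ys ! 1)"
    using recursive_prec2[OF recursive_zero
        recursive_add[OF recursive_nth[of 0 3] recursive_nth[of 2 3]]]
    by (rule recursive_cong) (auto simp: rec_nat_mult length_Suc_conv numeral_2_eq_2)
qed

lemma recursive_diff:
  assumes "recursive k f" and "recursive k g"
  shows "recursive k (\<lambda>xs. f xs - g xs)"
proof -
  have pred: "recursive 1 (\<lambda>ys. ys ! 0 - 1)"
    using recursive_prec1[OF recursive_zero recursive_nth[of 1 2]]
    by (rule recursive_cong) (auto simp: rec_nat_pred length_Suc_conv)
  have "recursive 2 (\<lambda>ys. ys ! 1 - ys ! 0)"
    using recursive_prec2[OF recursive_nth[of 0 1] recursive_op1[OF pred recursive_nth[of 0 3]]]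
    by (rule recursive_cong) (auto simp: rec_nat_diff length_Suc_conv numeral_2_eq_2)
  from recursive_op2[OF this assms(2,1)] show ?thesis .
qed

lemma recursive_power2: "recursive k f \<Longrightarrow> recursive k (\<lambda>xs. 2 ^ f xs)"
proof (erule recursive_op1[rotated])
  show "recursive 1 (\<lambda>ys. 2 ^ (ys ! 0))"
    using recursive_prec1[OF recursive_const[of 0 1]
        recursive_add[OF recursive_nth[of 0 2] recursive_nth[of 0 2]]]
    by (rule recursive_cong) (auto simp: rec_nat_power2 length_Suc_conv)
qed

lemma recursive_triangle: "recursive k f \<Longrightarrow> recursive k (\<lambda>xs. triangle (f xs))"
proof (erule recursive_op1[rotated])
  show "recursive 1 (\<lambda>ys. triangle (ys ! 0))"
    using recursive_prec1[OF recursive_zero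
        recursive_add[OF recursive_nth[of 0 2] recursive_Suc[OF recursive_nth[of 1 2]]]]
    by (rule recursive_cong) (auto simp: rec_nat_triangle length_Suc_conv)
qed

lemma recursive_sgn: "recursive k f \<Longrightarrow> recursive k (\<lambda>xs. of_bool (0 < f xs))"
proof (erule recursive_op1[rotated])
  show "recursive 1 (\<lambda>ys. of_bool (0 < ys ! 0))"
    using recursive_prec1[OF recursive_zero recursive_const[of 2 1]]
    by (rule recursive_cong) (auto simp: rec_nat_sgn length_Suc_conv)
qed

lemma recursive_le:
  assumes "recursive k f" and "recursive k g"
  shows "recursive k (\<lambda>xs. of_bool (f xs \<le> g xs))"
proof -
  have "recursive k (\<lambda>xs. 1 - of_bool (0 < f xs - g xs))"
    using assms by (intro recursive_diff recursive_const recursive_sgn)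
  then show ?thesis by (rule recursive_cong) auto
qed

lemma recursive_less:
  "recursive k f \<Longrightarrow> recursive k g \<Longrightarrow> recursive k (\<lambda>xs. of_bool (f xs < g xs))"
  using recursive_le[of k "\<lambda>xs. Suc (f xs)" g] recursive_Suc by (simp add: Suc_le_eq)

lemma recursive_conj:
  "recursive k (\<lambda>xs. of_bool (P xs)) \<Longrightarrow> recursive k (\<lambda>xs. of_bool (Q xs)) \<Longrightarrow>
   recursive k (\<lambda>xs. of_bool (P xs \<and> Q xs))"
  by (drule (1) recursive_mult) (simp only: of_bool_conj)

lemma recursive_not:
  "recursive k (\<lambda>xs. of_bool (P xs)) \<Longrightarrow> recursive k (\<lambda>xs. of_bool (\<not> P xs))"
  by (drule recursive_diff[OF recursive_const[of k 1]]) (rule recursive_cong, assumption, simp)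

lemma recursive_disj:
  "recursive k (\<lambda>xs. of_bool (P xs)) \<Longrightarrow> recursive k (\<lambda>xs. of_bool (Q xs)) \<Longrightarrow>
   recursive k (\<lambda>xs. of_bool (P xs \<or> Q xs))"
  by (drule (1) recursive_add, drule recursive_sgn) (rule recursive_cong, assumption, simp)

lemma recursive_imp:
  "recursive k (\<lambda>xs. of_bool (P xs)) \<Longrightarrow> recursive k (\<lambda>xs. of_bool (Q xs)) \<Longrightarrow>
   recursive k (\<lambda>xs. of_bool (P xs \<longrightarrow> Q xs))"
  by (drule recursive_not, drule (1) recursive_disj) simp

lemma recursive_eq:
  assumes "recursive k f" and "recursive k g"
  shows "recursive k (\<lambda>xs. of_bool (f xs = g xs))"
proof -
  have "recursive k (\<lambda>xs. of_bool (f xs \<le> g xs \<and> g xs \<le> f xs))"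
    by (intro recursive_conj recursive_le assms)
  then show ?thesis by (rule recursive_cong) auto
qed

lemma recursive_If:
  assumes "recursive k (\<lambda>xs. of_bool (P xs))" and "recursive k f" and "recursive k g"
  shows "recursive k (\<lambda>xs. if P xs then f xs else g xs)"
proof -
  have "recursive k (\<lambda>xs. of_bool (P xs) * f xs + (1 - of_bool (P xs)) * g xs)"
    using assms by (intro recursive_add recursive_mult recursive_diff recursive_const)
  then show ?thesis by (rule recursive_cong) auto
qed

lemma recursive_mod:
  assumes "recursive k f" and "recursive k g"
  shows "recursive k (\<lambda>xs. f xs mod g xs)"
proof (rule recursive_op2[OF _ assms])
  define step where "step zs = (if Suc (zs ! 0) = zs ! 2 then 0 else Suc (zs ! 0))" for zs
  have "recursive 3 step"
    unfolding step_def
    by (intro recursive_If recursive_eq recursive_Suc recursive_nth recursive_const) auto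
  from recursive_prec2[OF recursive_zero this] show "recursive 2 (\<lambda>ys. ys ! 0 mod ys ! 1)"
  proof (rule recursive_cong)
    fix xs :: "nat list" assume "length xs = 2"
    then obtain x y where "xs = [x, y]" by (auto simp: length_Suc_conv numeral_2_eq_2)
    then show "rec_nat 0 (\<lambda>n y. step [y, n, xs ! 1]) (xs ! 0) = xs ! 0 mod xs ! 1"
      by (simp add: step_def rec_nat_mod cong: if_cong)
  qed
qed

lemma recursive_sum:
  assumes "recursive k b" and "recursive (Suc k) (\<lambda>ys. f (hd ys) (tl ys))"
  shows "recursive k (\<lambda>xs. \<Sum>i<b xs. f i xs)"
proof -
  have "recursive (Suc (Suc k)) (\<lambda>zs. f (hd (tl zs)) (tl (tl zs)))"
    using recursive_compose'[OF assms(2) recursive_vec_tl_id[of "Suc k"]] by simp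
  then have "recursive (Suc (Suc k)) (\<lambda>zs. hd zs + f (hd (tl zs)) (tl (tl zs)))"
    by (intro recursive_add recursive_hd) simp_all
  from recursive_prec[OF recursive_zero this]
  have "recursive (Suc k) (\<lambda>xs. \<Sum>i<hd xs. f i (tl xs))"
    by (simp add: rec_nat_sum)
  from recursive_compose[OF this recursive_vec_Cons[OF assms(1) recursive_vec_id]] show ?thesis
    by simp
qed

lemma recursive_ex_less:
  assumes "recursive k b" and "recursive (Suc k) (\<lambda>ys. of_bool (P (hd ys) (tl ys)))"
  shows "recursive k (\<lambda>xs. of_bool (\<exists>i<b xs. P i xs))"
proof -
  have "recursive k (\<lambda>xs. of_bool (0 < (\<Sum>i<b xs. of_bool (P i xs) :: nat)))"
    by (intro recursive_sgn recursive_sum assms)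
  then show ?thesis by (rule recursive_cong) (auto simp: card_gt_0_iff)
qed

lemma recursive_all_less:
  assumes "recursive k b" and "recursive (Suc k) (\<lambda>ys. of_bool (P (hd ys) (tl ys)))"
  shows "recursive k (\<lambda>xs. of_bool (\<forall>i<b xs. P i xs))"
proof -
  have "recursive k (\<lambda>xs. of_bool (\<not> (\<exists>i<b xs. \<not> P i xs)))"
    by (intro recursive_not recursive_ex_less assms)
  then show ?thesis by (rule recursive_cong) auto
qed

lemma computable_iff_recursive: "computable f \<longleftrightarrow> recursive 1 (\<lambda>xs. f (hd xs))"
proof -
  have "(\<forall>xs. length xs = 1 \<longrightarrow> evalr p xs (f (hd xs))) \<longleftrightarrow> (\<forall>n. evalr p [n] (f n))" for p
    by (auto simp: length_Suc_conv)
  then show ?thesis unfolding computable_def recursive_def by simp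
qed

lemma decidable_set_iff_recursive:
  "decidable_set R \<longleftrightarrow> recursive 1 (\<lambda>xs. of_bool (hd xs \<in> R))"
  unfolding decidable_set_def computable_iff_recursive by (simp add: of_bool_def)

lemma recursive_mem:
  "decidable_set R \<Longrightarrow> recursive k f \<Longrightarrow> recursive k (\<lambda>xs. of_bool (f xs \<in> R))"
  unfolding decidable_set_iff_recursive
  by (drule recursive_compose[of 1 _ k "\<lambda>xs. [f xs]"]) (auto simp: recursive_vec_Cons recursive_vec_Nil)

lemma recursive_mem_finite:
  assumes "finite T" and "recursive k f"
  shows "recursive k (\<lambda>xs. of_bool (f xs \<in> T))"
  using assms(1)
proof (induction T)
  case empty then show ?case by (simp add: recursive_zero)
next
  case (insert t T)
  then have "recursive k (\<lambda>xs. of_bool (f xs = t \<or> f xs \<in> T))"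
    by (intro recursive_disj recursive_eq assms(2) recursive_const)
  then show ?case by simp
qed

lemma bit_nat_iff_mod: "bit (c::nat) i \<longleftrightarrow> 2 ^ i \<le> c mod 2 ^ Suc i"
proof -
  have split: "c mod 2 ^ Suc i = 2 ^ i * (c div 2 ^ i mod 2) + c mod 2 ^ i"
    using mod_mult2_eq[of c "2 ^ i" 2] by (simp add: power_Suc2 mult.commute)
  consider (even) "c div 2 ^ i mod 2 = 0" | (odd) "c div 2 ^ i mod 2 = 1" by linarith
  then show ?thesis
  proof cases
    case even
    then show ?thesis unfolding split bit_iff_odd odd_iff_mod_2_eq_one by (simp add: not_le)
  next
    case odd
    then show ?thesis unfolding split bit_iff_odd odd_iff_mod_2_eq_one by simp
  qed
qed

lemma recursive_bit:
  "recursive k f \<Longrightarrow> recursive k g \<Longrightarrow> recursive k (\<lambda>xs. of_bool (bit (f xs) (g xs)))"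
  unfolding bit_nat_iff_mod by (intro recursive_le recursive_mod recursive_power2 recursive_Suc)

lemmas recursive_intros =
  recursive_const recursive_Suc recursive_add recursive_mult recursive_diff recursive_power2
  recursive_triangle recursive_mod recursive_sgn recursive_le recursive_less recursive_eq
  recursive_conj recursive_not recursive_disj recursive_imp recursive_If recursive_sum
  recursive_ex_less recursive_all_less recursive_bit recursive_hd recursive_vec_hd recursive_vec_nth
  recursive_vec_tl_id recursive_vec_tl recursive_vec_id recursive_vec_Cons recursive_vec_Nil

section \<open>Evaluation with a step bound\<close>

definition first_zero :: "(nat \<Rightarrow> nat option) \<Rightarrow> nat \<Rightarrow> bool" where
  "first_zero F y \<longleftrightarrow> F y = Some 0 \<and> (\<forall>j<y. \<exists>v. F j = Some (Suc v))"

lemma first_zero_unique: "first_zero F y \<Longrightarrow> first_zero F y' \<Longrightarrow> y = y'"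
  unfolding first_zero_def by (metis Zero_not_Suc linorder_neqE_nat option.inject)

lemma Least_first_zero: "first_zero F y \<Longrightarrow> (LEAST y. first_zero F y) = y"
  by (metis LeastI first_zero_unique)

lemma first_zero_mono:
  "first_zero F y \<Longrightarrow> (\<And>j w. F j = Some w \<Longrightarrow> G j = Some w) \<Longrightarrow> first_zero G y"
  unfolding first_zero_def by blast

(* The step bound s only limits the search of unbounded minimisation. *)
fun eval_bounded :: "recf \<Rightarrow> nat \<Rightarrow> nat list \<Rightarrow> nat option" where
  "eval_bounded Zero s xs = Some 0"
| "eval_bounded Succ s xs = (case xs of [] \<Rightarrow> None | x # _ \<Rightarrow> Some (Suc x))"
| "eval_bounded (Proj i) s xs = (if i < length xs then Some (xs ! i) else None)"
| "eval_bounded (Comp f gs) s xs = (if \<forall>g\<in>set gs. eval_bounded g s xs \<noteq> None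
      then eval_bounded f s (map (\<lambda>g. the (eval_bounded g s xs)) gs) else None)"
| "eval_bounded (Prec f g) s xs = (case xs of [] \<Rightarrow> None | n # ys \<Rightarrow>
      rec_nat (eval_bounded f s ys)
        (\<lambda>k r. case r of None \<Rightarrow> None | Some y \<Rightarrow> eval_bounded g s (y # k # ys)) n)"
| "eval_bounded (Minim f) s xs = (if \<exists>y<s. first_zero (\<lambda>y. eval_bounded f s (y # xs)) y
      then Some (LEAST y. first_zero (\<lambda>y. eval_bounded f s (y # xs)) y) else None)"

lemma eval_bounded_Minim:
  "eval_bounded (Minim f) s xs = Some v \<longleftrightarrow> v < s \<and> first_zero (\<lambda>y. eval_bounded f s (y # xs)) v"
  by (auto simp: Least_first_zero dest: first_zero_unique)

lemma eval_bounded_Comp_Some: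
  assumes "eval_bounded (Comp f gs) s xs = Some v"
  shows "\<forall>g\<in>set gs. eval_bounded g s xs \<noteq> None"
    and "eval_bounded f s (map (\<lambda>g. the (eval_bounded g s xs)) gs) = Some v"
  using assms by (auto split: if_splits)

lemma eval_bounded_mono:
  "eval_bounded p s xs = Some v \<Longrightarrow> s \<le> s' \<Longrightarrow> eval_bounded p s' xs = Some v"
proof (induction p arbitrary: xs v)
  case (Comp f gs)
  note defined = eval_bounded_Comp_Some[OF Comp.prems(1)]
  have same: "eval_bounded g s' xs = eval_bounded g s xs" if "g \<in> set gs" for g
    using defined(1) Comp.IH(2)[OF that] Comp.prems(2) that by fastforce
  then have "\<forall>g\<in>set gs. eval_bounded g s' xs \<noteq> None"
    and "map (\<lambda>g. the (eval_bounded g s' xs)) gs = map (\<lambda>g. the (eval_bounded g s xs)) gs"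
    using defined(1) by simp_all
  then have "eval_bounded (Comp f gs) s' xs =
      eval_bounded f s' (map (\<lambda>g. the (eval_bounded g s xs)) gs)"
    by (simp del: map_eq_conv)
  then show ?case using defined(2) Comp.IH(1) Comp.prems(2) by simp
next
  case (Prec f g)
  show ?case
  proof (cases xs)
    case (Cons n ys)
    have "rec_nat (eval_bounded f s ys)
            (\<lambda>k r. case r of None \<Rightarrow> None | Some y \<Rightarrow> eval_bounded g s (y # k # ys)) m = Some v \<Longrightarrow>
          rec_nat (eval_bounded f s' ys)
            (\<lambda>k r. case r of None \<Rightarrow> None | Some y \<Rightarrow> eval_bounded g s' (y # k # ys)) m = Some v" for m v
      using Prec.IH Prec.prems(2)
      by (induction m arbitrary: v) (auto split: option.splits)
    then show ?thesis using Prec.prems Cons by simp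
  qed (use Prec.prems in simp)
next
  case (Minim f)
  then show ?case
    unfolding eval_bounded_Minim by (auto elim!: first_zero_mono)
qed simp_all

lemma eval_bounded_sound: "eval_bounded p s xs = Some v \<Longrightarrow> evalr p xs v"
proof (induction p arbitrary: xs v)
  case Succ then show ?case by (auto intro: evalr.intros split: list.splits)
next
  case (Proj i) then show ?case by (auto intro: evalr.intros split: if_splits)
next
  case (Comp f gs)
  note defined = eval_bounded_Comp_Some[OF Comp.prems]
  have "list_all2 (\<lambda>g y. evalr g xs y) gs (map (\<lambda>g. the (eval_bounded g s xs)) gs)"
    using defined(1) Comp.IH(2) by (auto simp: list_all2_conv_all_nth)
  with defined(2) Comp.IH(1) show ?case by (blast intro: evalr.ev_comp)
next
  case (Prec f g)
  show ?case
  proof (cases xs)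
    case (Cons n ys)
    have "rec_nat (eval_bounded f s ys)
            (\<lambda>k r. case r of None \<Rightarrow> None | Some y \<Rightarrow> eval_bounded g s (y # k # ys)) m = Some v \<Longrightarrow>
          evalr (Prec f g) (m # ys) v" for m v
    proof (induction m arbitrary: v)
      case 0 then show ?case using Prec.IH(1) by (auto intro: evalr.intros)
    next
      case (Suc m) then show ?case using Prec.IH(2) by (auto intro: evalr.intros split: option.splits)
    qed
    then show ?thesis using Prec.prems Cons by simp
  qed (use Prec.prems in simp)
next
  case (Minim f)
  from Minim.prems have "first_zero (\<lambda>y. eval_bounded f s (y # xs)) v"
    unfolding eval_bounded_Minim by blast
  then show ?case
    unfolding first_zero_def by (blast intro: evalr.ev_minim Minim.IH)
qed (auto intro: evalr.intros)

lemma eval_bounded_common_bound: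
  fixes n :: nat
  assumes "\<forall>i<n. \<exists>s. eval_bounded (P i) s (X i) = Some (V i)"
  shows "\<exists>s. \<forall>i<n. eval_bounded (P i) s (X i) = Some (V i)"
proof -
  obtain S where S: "\<forall>i<n. eval_bounded (P i) (S i) (X i) = Some (V i)"
    using assms by metis
  have "S i \<le> Max (S ` {..<n})" if "i < n" for i
    using that by (auto intro!: Max_ge)
  then show ?thesis using S by (blast intro: eval_bounded_mono)
qed

lemma eval_bounded_CompI:
  assumes "list_all2 (\<lambda>g y. eval_bounded g s xs = Some y) gs ys" and "eval_bounded f s ys = Some z"
  shows "eval_bounded (Comp f gs) s xs = Some z"
proof -
  have "\<forall>g\<in>set gs. eval_bounded g s xs \<noteq> None"
    using assms(1) by (auto simp: list_all2_conv_all_nth in_set_conv_nth)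
  moreover have "map (\<lambda>g. the (eval_bounded g s xs)) gs = ys"
    using assms(1) by (auto intro: nth_equalityI simp: list_all2_conv_all_nth)
  ultimately show ?thesis using assms(2) by simp
qed

lemma eval_bounded_complete: "evalr p xs v \<Longrightarrow> \<exists>s. eval_bounded p s xs = Some v"
proof (induction rule: evalr.induct)
  case (ev_comp xs gs ys f z)
  have "\<forall>i<length gs. \<exists>s. eval_bounded (gs ! i) s xs = Some (ys ! i)"
    using ev_comp.IH by (auto simp: list_all2_conv_all_nth)
  then obtain s1 where s1: "\<forall>i<length gs. eval_bounded (gs ! i) s1 xs = Some (ys ! i)"
    using eval_bounded_common_bound[where P="(!) gs" and X="\<lambda>_. xs"] by blast
  obtain s2 where s2: "eval_bounded f s2 ys = Some z"
    using ev_comp.IH by blast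
  have "\<forall>i<length gs. eval_bounded (gs ! i) (max s1 s2) xs = Some (ys ! i)"
    using s1 by (meson eval_bounded_mono max.cobounded1)
  moreover have "length gs = length ys"
    using ev_comp.IH(1) by (rule list_all2_lengthD)
  ultimately have "list_all2 (\<lambda>g y. eval_bounded g (max s1 s2) xs = Some y) gs ys"
    by (simp add: list_all2_conv_all_nth)
  moreover have "eval_bounded f (max s1 s2) ys = Some z"
    using s2 by (meson eval_bounded_mono max.cobounded2)
  ultimately show ?case by (blast intro: eval_bounded_CompI)
next
  case (ev_precS f g n xs y z)
  obtain s1 s2 where "eval_bounded (Prec f g) s1 (n # xs) = Some y"
    and "eval_bounded g s2 (y # n # xs) = Some z"
    using ev_precS.IH by blast
  then have "eval_bounded (Prec f g) (max s1 s2) (n # xs) = Some y"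
    and "eval_bounded g (max s1 s2) (y # n # xs) = Some z"
    by (meson eval_bounded_mono max.cobounded1 max.cobounded2)+
  then show ?case by (intro exI[of _ "max s1 s2"]) simp
next
  case (ev_minim f y xs)
  obtain W where W: "\<forall>k<y. 0 < W k \<and> (\<exists>s. eval_bounded f s (k # xs) = Some (W k))"
    using ev_minim.IH by metis
  define V where "V k = (if k = y then 0 else W k)" for k
  have "\<forall>k<Suc y. \<exists>s. eval_bounded f s (k # xs) = Some (V k)"
    using W ev_minim.IH by (auto simp: V_def less_Suc_eq)
  then obtain s where s: "\<forall>k<Suc y. eval_bounded f s (k # xs) = Some (V k)"
    using eval_bounded_common_bound[where P="\<lambda>_. f" and X="\<lambda>k. k # xs"] by blast
  define s' where "s' = max s (Suc y)"
  have F: "eval_bounded f s' (k # xs) = Some (V k)" if "k < Suc y" for k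
    using s that by (auto intro: eval_bounded_mono simp: s'_def)
  have "first_zero (\<lambda>k. eval_bounded f s' (k # xs)) y"
    unfolding first_zero_def using F W by (auto simp: V_def gr0_conv_Suc)
  moreover have "y < s'" by (simp add: s'_def)
  ultimately show ?case using eval_bounded_Minim by blast
qed auto

definition opt_code :: "nat option \<Rightarrow> nat" where
  "opt_code r = (case r of None \<Rightarrow> 0 | Some v \<Rightarrow> Suc v)"

lemma opt_code_simps [simp]: "opt_code None = 0" "opt_code (Some v) = Suc v"
  by (simp_all add: opt_code_def)

lemma opt_code_pos_iff: "0 < opt_code r \<longleftrightarrow> r \<noteq> None"
  by (cases r) auto

lemma first_zero_iff_opt_code:
  "first_zero F y \<longleftrightarrow> opt_code (F y) = 1 \<and> (\<forall>j<y. 2 \<le> opt_code (F j))"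
proof -
  have "opt_code r = 1 \<longleftrightarrow> r = Some 0" "2 \<le> opt_code r \<longleftrightarrow> (\<exists>v. r = Some (Suc v))" for r
    by (cases r; simp add: Suc_le_eq gr0_conv_Suc)+
  then show ?thesis unfolding first_zero_def by simp
qed

(* eval_code p (s # xs) codes the value of p on xs within step bound s *)
definition eval_code :: "recf \<Rightarrow> nat list \<Rightarrow> nat" where
  "eval_code p xs = opt_code (eval_bounded p (hd xs) (tl xs))"

lemma eval_code_Comp:
  "eval_code (Comp f gs) (s # xs) =
     of_bool (\<forall>g\<in>set gs. 0 < eval_code g (s # xs)) *
     eval_code f (s # map (\<lambda>g. eval_code g (s # xs) - 1) gs)"
  unfolding eval_code_def list.sel
proof (cases "\<forall>g\<in>set gs. eval_bounded g s xs \<noteq> None")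
  case True
  then have "map (\<lambda>g. opt_code (eval_bounded g s xs) - 1) gs =
      map (\<lambda>g. the (eval_bounded g s xs)) gs"
    by (auto simp: opt_code_def split: option.splits)
  with True show "opt_code (eval_bounded (Comp f gs) s xs) =
      of_bool (\<forall>g\<in>set gs. 0 < opt_code (eval_bounded g s xs)) *
      opt_code (eval_bounded f s (map (\<lambda>g. opt_code (eval_bounded g s xs) - 1) gs))"
    by (simp add: opt_code_pos_iff del: map_eq_conv)
qed (auto simp: opt_code_pos_iff)

lemma eval_code_Prec:
  "eval_code (Prec f g) (s # n # ys) =
     rec_nat (eval_code f (s # ys)) (\<lambda>j y. of_bool (0 < y) * eval_code g (s # (y - 1) # j # ys)) n"
  unfolding eval_code_def list.sel eval_bounded.simps list.case
proof (induction n)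
  case (Suc n)
  let ?R = "rec_nat (eval_bounded f s ys)
    (\<lambda>k r. case r of None \<Rightarrow> None | Some y \<Rightarrow> eval_bounded g s (y # k # ys)) n"
  let ?E = "rec_nat (opt_code (eval_bounded f s ys))
    (\<lambda>j y. of_bool (0 < y) * opt_code (eval_bounded g s ((y - 1) # j # ys))) n"
  show ?case
  proof (cases ?R)
    case None
    then have "?E = 0" using Suc.IH by simp
    then show ?thesis using None by simp
  next
    case (Some a)
    then have "?E = Suc a" using Suc.IH by simp
    then show ?thesis using Some by simp
  qed
qed simp

lemma sum_unique_witness:
  assumes "\<And>y y'. P y \<Longrightarrow> P y' \<Longrightarrow> y = y'"
  shows "(\<Sum>y<s. Suc y * of_bool (P y)) = (if \<exists>y<s. P y then Suc (LEAST y. P y) else 0)"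
proof (cases "\<exists>y<s. P y")
  case True
  then obtain y0 where y0: "y0 < s" "P y0" by blast
  have "(LEAST y. P y) = y0" using y0 assms by (intro Least_equality) auto
  moreover have "(\<Sum>y<s. Suc y * of_bool (P y)) = (\<Sum>y<s. if y = y0 then Suc y0 else 0)"
    using assms y0 by (intro sum.cong) auto
  ultimately show ?thesis using True y0 by simp
qed auto

lemma eval_code_Minim:
  "eval_code (Minim f) (s # xs) =
     (\<Sum>y<s. Suc y * of_bool (eval_code f (s # y # xs) = 1 \<and> (\<forall>j<y. 2 \<le> eval_code f (s # j # xs))))"
proof -
  let ?P = "first_zero (\<lambda>y. eval_bounded f s (y # xs))"
  have "eval_code (Minim f) (s # xs) = (if \<exists>y<s. ?P y then Suc (LEAST y. ?P y) else 0)"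
    by (simp add: eval_code_def)
  also have "\<dots> = (\<Sum>y<s. Suc y * of_bool (?P y))"
    by (rule sum_unique_witness[symmetric]) (rule first_zero_unique)
  finally show ?thesis by (simp only: first_zero_iff_opt_code) (simp add: eval_code_def)
qed

lemma recursive_list_all:
  "\<forall>g\<in>set gs. recursive k (\<lambda>xs. of_bool (P g xs)) \<Longrightarrow>
   recursive k (\<lambda>xs. of_bool (\<forall>g\<in>set gs. P g xs))"
  by (induction gs) (auto intro: recursive_conj recursive_const)

lemma recursive_vec_map:
  "\<forall>g\<in>set gs. recursive k (h g) \<Longrightarrow> recursive_vec k (length gs) (\<lambda>xs. map (\<lambda>g. h g xs) gs)"
  by (induction gs) (auto intro: recursive_vec_Cons recursive_vec_Nil)

lemma recursive_eval_code_Comp: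
  assumes "recursive (Suc (length gs)) (eval_code f)"
    and "\<forall>g\<in>set gs. recursive (Suc k) (eval_code g)"
  shows "recursive (Suc k) (eval_code (Comp f gs))"
proof -
  have "recursive (Suc k) (\<lambda>xs. of_bool (\<forall>g\<in>set gs. 0 < eval_code g xs) *
      eval_code f (hd xs # map (\<lambda>g. eval_code g xs - 1) gs))"
    using assms(2)
    by (intro recursive_mult recursive_list_all recursive_compose[OF assms(1)] recursive_vec_Cons
        recursive_hd recursive_vec_map ballI recursive_sgn recursive_diff recursive_const) auto
  then show ?thesis by (rule recursive_cong) (auto simp: length_Suc_conv eval_code_Comp)
qed

lemma recursive_eval_code_Prec:
  assumes "recursive (Suc k) (eval_code f)" and "recursive (Suc (Suc (Suc k))) (eval_code g)"
  shows "recursive (Suc (Suc k)) (eval_code (Prec f g))"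
proof -
  define step where "step ws = of_bool (0 < hd ws) *
    eval_code g (hd (tl (tl ws)) # (hd ws - 1) # hd (tl ws) # tl (tl (tl ws)))" for ws
  have "recursive (Suc (Suc (Suc k))) step"
    unfolding step_def by (rule recursive_intros recursive_compose'[OF assms(2)] | simp)+
  note prec = recursive_prec[OF assms(1) this]
  have "recursive_vec (Suc (Suc k)) (Suc (Suc k)) (\<lambda>xs. hd (tl xs) # hd xs # tl (tl xs))"
    by (rule recursive_intros | simp)+
  from recursive_compose[OF prec this]
  have "recursive (Suc (Suc k)) (\<lambda>xs. rec_nat (eval_code f (hd xs # tl (tl xs)))
      (\<lambda>n y. step (y # n # hd xs # tl (tl xs))) (hd (tl xs)))"
    by simp
  then show ?thesis
    by (rule recursive_cong) (auto simp: length_Suc_conv eval_code_Prec step_def)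
qed

lemma recursive_eval_code_Minim:
  assumes "recursive (Suc (Suc k)) (eval_code f)"
  shows "recursive (Suc k) (eval_code (Minim f))"
proof -
  have "recursive (Suc k) (\<lambda>xs. \<Sum>y<hd xs. Suc y * of_bool (eval_code f (hd xs # y # tl xs) = 1 \<and>
      (\<forall>j<y. 2 \<le> eval_code f (hd xs # j # tl xs))))"
    by (rule recursive_intros recursive_compose'[OF assms] | simp)+
  then show ?thesis by (rule recursive_cong) (auto simp: length_Suc_conv eval_code_Minim)
qed

theorem recursive_eval_code: "recursive (Suc k) (eval_code p)"
proof (induction p arbitrary: k)
  case Zero
  show ?case by (rule recursive_cong[OF recursive_const[of _ 1]]) (simp add: eval_code_def)
next
  case Succ
  have "recursive (Suc k) (\<lambda>xs. if 0 < k then Suc (Suc (hd (tl xs))) else 0)"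
    by (cases k) (simp add: recursive_zero, (rule recursive_intros | simp)+)
  then show ?case by (rule recursive_cong) (auto simp: eval_code_def length_Suc_conv neq_Nil_conv)
next
  case (Proj i)
  have "recursive (Suc k) (\<lambda>xs. if i < k then Suc (tl xs ! i) else 0)"
    by (cases "i < k") (simp_all add: recursive_zero, (rule recursive_intros | simp)+)
  then show ?case by (rule recursive_cong) (auto simp: eval_code_def)
next
  case (Comp f gs)
  then show ?case by (intro recursive_eval_code_Comp) auto
next
  case (Prec f g)
  show ?case
  proof (cases k)
    case 0
    then show ?thesis
      by (intro recursive_cong[OF recursive_zero]) (auto simp: eval_code_def length_Suc_conv)
  qed (simp add: recursive_eval_code_Prec Prec.IH)
next
  case (Minim f)
  then show ?case by (rule recursive_eval_code_Minim)
qed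

lemma recursive_eval_bounded_at:
  "recursive k f \<Longrightarrow> recursive k g \<Longrightarrow> recursive k (\<lambda>xs. opt_code (eval_bounded p (f xs) [g xs]))"
  using recursive_compose[OF recursive_eval_code[of 1 p], of k "\<lambda>xs. [f xs, g xs]"]
  by (simp add: recursive_vec_Cons recursive_vec_Nil eval_code_def)

section \<open>Codes of strings and \<open>\<Pi>\<^sup>0\<^sub>1\<close> classes\<close>

lemma str_code_eq_horner_sum: "str_code bs = horner_sum of_bool 2 (bs @ [True])"
  by (simp add: str_code_def horner_sum_foldr of_bool_def)

lemma length_prefix_of [simp]: "length (prefix_of Z n) = n"
  by (simp add: prefix_of_def)

lemma str_code_prefix_of: "str_code (prefix_of Z n) = 2 ^ n + horner_sum of_bool 2 (prefix_of Z n)"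
  by (simp add: str_code_eq_horner_sum horner_sum_append)

lemma bit_horner_sum_prefix_of:
  "bit (horner_sum of_bool 2 (prefix_of Z n) :: nat) i \<longleftrightarrow> i < n \<and> i \<in> Z"
  by (auto simp: bit_horner_sum_bit_iff prefix_of_def)

lemma sum_of_bool_less: "m \<le> c \<Longrightarrow> (\<Sum>i<c. of_bool (i < m) :: nat) = m"
proof -
  assume "m \<le> c"
  then have "{..<c} \<inter> {i. i < m} = {..<m}" by auto
  then show ?thesis by simp
qed

lemma floor_log_eq_sum: "floor_log c = (\<Sum>i<c. of_bool (2 ^ Suc i \<le> c))"
proof -
  have "2 ^ Suc i \<le> c \<longleftrightarrow> i < floor_log c" for i
  proof
    assume "2 ^ Suc i \<le> c"
    also have "c < 2 ^ Suc (floor_log c)" using floor_log_exp2_gt[of c] by simp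
    finally show "i < floor_log c" by simp
  next
    assume "i < floor_log c"
    then have "c > 0" by (auto intro: ccontr)
    have "(2::nat) ^ Suc i \<le> 2 ^ floor_log c"
      using \<open>i < floor_log c\<close> by (intro power_increasing) simp_all
    also have "\<dots> \<le> c" using \<open>c > 0\<close> by (rule floor_log_exp2_le)
    finally show "2 ^ Suc i \<le> c" .
  qed
  then have "(\<Sum>i<c. of_bool (2 ^ Suc i \<le> c)) = (\<Sum>i<c. of_bool (i < floor_log c) :: nat)"
    by presburger
  also have "\<dots> = floor_log c"
  proof (rule sum_of_bool_less, cases "c = 0")
    case False
    then show "floor_log c \<le> c" using floor_log_exp2_le[of c] less_exp[of "floor_log c"] by linarith
  qed simp
  finally show ?thesis ..
qed

lemma recursive_floor_log: "recursive k f \<Longrightarrow> recursive k (\<lambda>xs. floor_log (f xs))"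
  unfolding floor_log_eq_sum by (rule recursive_intros recursive_tl | assumption | simp)+

(* the string coded by c has length floor_log c, the position of the leading 1 of c *)
definition code_set :: "nat \<Rightarrow> nat set" where
  "code_set c = {i. i < floor_log c \<and> bit c i}"

lemma floor_log_str_code_prefix_of: "floor_log (str_code (prefix_of Z n)) = n"
  using horner_sum_of_bool_2_less[of "prefix_of Z n"]
  by (intro floor_log_eqI) (auto simp: str_code_prefix_of)

lemma code_set_str_code_prefix_of: "code_set (str_code (prefix_of Z n)) = Z \<inter> {..<n}"
  unfolding code_set_def floor_log_str_code_prefix_of
  by (auto simp: str_code_eq_horner_sum bit_horner_sum_bit_iff prefix_of_def nth_append)

lemma Pi01_classI:
  assumes "decidable_set {c. P (floor_log c) (code_set c)}"
  shows "Pi01_class {Z. \<forall>n. P n (Z \<inter> {..<n})}"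
  unfolding Pi01_class_def
  using assms floor_log_str_code_prefix_of code_set_str_code_prefix_of by auto

lemma Pi01_class_Int:
  assumes "Pi01_class A" and "Pi01_class B"
  shows "Pi01_class (A \<inter> B)"
proof -
  obtain R S where "decidable_set R" "A = {X. \<forall>n. str_code (prefix_of X n) \<in> R}"
    and "decidable_set S" "B = {X. \<forall>n. str_code (prefix_of X n) \<in> S}"
    using assms unfolding Pi01_class_def by blast
  moreover have "decidable_set (R \<inter> S)" if "decidable_set R" "decidable_set S"
    using that unfolding decidable_set_iff_recursive Int_iff
    by (intro recursive_conj) (auto intro: recursive_mem recursive_hd)
  ultimately show ?thesis unfolding Pi01_class_def by blast
qed

lemma Pi01_class_below_subset:
  assumes "finite T"
  shows "Pi01_class {Z. Z \<inter> {..<L} \<subseteq> T}"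
proof -
  have "{c. code_set c \<inter> {..<L} \<subseteq> T} = {c. \<forall>i<floor_log c. bit c i \<and> i < L \<longrightarrow> i \<in> T}"
    by (auto simp: code_set_def)
  moreover have "decidable_set {c. \<forall>i<floor_log c. bit c i \<and> i < L \<longrightarrow> i \<in> T}"
    unfolding decidable_set_iff_recursive mem_Collect_eq
    by (rule recursive_intros recursive_floor_log recursive_mem_finite[OF assms] | simp)+
  ultimately have "Pi01_class {Z. \<forall>n. Z \<inter> {..<n} \<inter> {..<L} \<subseteq> T}"
    using Pi01_classI[of "\<lambda>n S. S \<inter> {..<L} \<subseteq> T"] by simp
  moreover have "{Z. Z \<inter> {..<L} \<subseteq> T} = {Z. \<forall>n. Z \<inter> {..<n} \<inter> {..<L} \<subseteq> T}"
    by auto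
  ultimately show ?thesis by simp
qed

lemma Pi01_class_superset_ce:
  assumes "ce D"
  shows "Pi01_class {Z. D \<inter> {K..} \<subseteq> Z}"
proof -
  obtain p where p: "\<And>i. i \<in> D \<longleftrightarrow> (\<exists>v. evalr p [i] v)"
    using assms unfolding ce_def by blast
  let ?P = "\<lambda>n S. \<forall>i<n. K \<le> i \<and> eval_bounded p n [i] \<noteq> None \<longrightarrow> i \<in> S"
  have "{c. ?P (floor_log c) (code_set c)} =
      {c. \<forall>i<floor_log c. K \<le> i \<and> 0 < opt_code (eval_bounded p (floor_log c) [i]) \<longrightarrow> bit c i}"
    by (auto simp: code_set_def opt_code_pos_iff)
  moreover have "decidable_set
      {c. \<forall>i<floor_log c. K \<le> i \<and> 0 < opt_code (eval_bounded p (floor_log c) [i]) \<longrightarrow> bit c i}"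
    unfolding decidable_set_iff_recursive mem_Collect_eq
    by (rule recursive_intros recursive_floor_log recursive_eval_bounded_at recursive_tl | simp)+
  ultimately have "Pi01_class {Z. \<forall>n. ?P n (Z \<inter> {..<n})}"
    using Pi01_classI[of ?P] by simp
  moreover have "D \<inter> {K..} \<subseteq> Z \<longleftrightarrow> (\<forall>n. \<forall>i<n. K \<le> i \<and> eval_bounded p n [i] \<noteq> None \<longrightarrow> i \<in> Z)"
    for Z
  proof
    assume "D \<inter> {K..} \<subseteq> Z"
    then show "\<forall>n. \<forall>i<n. K \<le> i \<and> eval_bounded p n [i] \<noteq> None \<longrightarrow> i \<in> Z"
      using p eval_bounded_sound by blast
  next
    assume halting: "\<forall>n. \<forall>i<n. K \<le> i \<and> eval_bounded p n [i] \<noteq> None \<longrightarrow> i \<in> Z"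
    show "D \<inter> {K..} \<subseteq> Z"
    proof
      fix i assume "i \<in> D \<inter> {K..}"
      then obtain s v where "eval_bounded p s [i] = Some v" "K \<le> i"
        using p eval_bounded_complete by blast
      then have "eval_bounded p (Suc (max i s)) [i] \<noteq> None"
        using eval_bounded_mono[of p s "[i]" v "Suc (max i s)"] by simp
      moreover have "i < Suc (max i s)" by simp
      ultimately show "i \<in> Z" using halting \<open>K \<le> i\<close> by blast
    qed
  qed
  ultimately show ?thesis by simp
qed

section \<open>Weights\<close>

lemma fst_prod_decode_eq_sum:
  "fst (prod_decode c) = (\<Sum>n<Suc c. n * of_bool (\<exists>m<Suc c. triangle (n + m) + n = c))"
proof -
  obtain a b where ab: "prod_decode c = (a, b)" by fastforce
  then have c: "c = triangle (a + b) + a"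
    using prod_decode_inverse[of c] by (simp add: prod_encode_def)
  have "(\<exists>m<Suc c. triangle (n + m) + n = c) \<longleftrightarrow> n = a" for n
  proof
    assume "\<exists>m<Suc c. triangle (n + m) + n = c"
    then obtain m where "prod_encode (n, m) = c" by (auto simp: prod_encode_def)
    then show "n = a" using ab prod_encode_inverse[of "(n, m)"] by simp
  next
    assume "n = a"
    moreover have "b < Suc c" using le_prod_encode_2[of b a] c by (simp add: prod_encode_def)
    ultimately show "\<exists>m<Suc c. triangle (n + m) + n = c" using c by blast
  qed
  moreover have "a < Suc c" using le_prod_encode_1[of a b] c by (simp add: prod_encode_def)
  ultimately show ?thesis using ab by (simp add: if_distrib cong: if_cong)
qed

lemma recursive_fst_prod_decode:
  "recursive k f \<Longrightarrow> recursive k (\<lambda>xs. fst (prod_decode (f xs)))"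
  unfolding fst_prod_decode_eq_sum by (rule recursive_intros recursive_tl | assumption | simp)+

definition wt_fin :: "nat set \<Rightarrow> real" where
  "wt_fin A = (\<Sum>i\<in>A. (1/2) ^ fst (prod_decode i))"

lemma wt_fin_nonneg: "0 \<le> wt_fin A"
  unfolding wt_fin_def by (simp add: sum_nonneg)

lemma wt_fin_mono: "finite B \<Longrightarrow> A \<subseteq> B \<Longrightarrow> wt_fin A \<le> wt_fin B"
  unfolding wt_fin_def by (rule sum_mono2) auto

lemma wt_eq_wt_fin: "finite A \<Longrightarrow> wt A = ennreal (wt_fin A)"
  unfolding wt_def wt_fin_def
  by (subst suminf_finite[of A]) (auto intro: sum_ennreal[symmetric] simp: if_distrib cong: sum.cong)

lemma wt_mono: "A \<subseteq> B \<Longrightarrow> wt A \<le> wt B"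
  unfolding wt_def by (rule suminf_le) auto

lemma wt_union: "wt (A \<union> B) \<le> wt A + wt B"
  unfolding wt_def suminf_add[OF summableI summableI] by (rule suminf_le) auto

lemma wt_eq_SUP: "wt A = (SUP n. ennreal (wt_fin (A \<inter> {..<n})))"
proof -
  have "(\<Sum>i<n. if i \<in> A then ennreal ((1/2) ^ fst (prod_decode i)) else 0) =
      ennreal (wt_fin (A \<inter> {..<n}))" for n
    unfolding wt_fin_def sum.If_cases[OF finite_lessThan]
    by (simp add: Int_commute)
  then show ?thesis unfolding wt_def suminf_eq_SUP by simp
qed

lemma wt_le_ennrealI: "(\<And>n. wt_fin (A \<inter> {..<n}) \<le> c) \<Longrightarrow> wt A \<le> ennreal c"
  unfolding wt_eq_SUP by (rule SUP_least) (simp add: ennreal_leI)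

lemma wt_fin_le_wt: "finite F \<Longrightarrow> F \<subseteq> A \<Longrightarrow> ennreal (wt_fin F) \<le> wt A"
  by (metis wt_eq_wt_fin wt_mono)

lemma wt_tail_small:
  assumes "wt D < \<infinity>" and "0 < \<epsilon>"
  shows "\<exists>K. wt (D \<inter> {K..}) \<le> ennreal \<epsilon>"
proof -
  define d where "d = enn2real (wt D)"
  have wD: "wt D = ennreal d" and d0: "0 \<le> d"
    using assms(1) by (simp_all add: d_def ennreal_enn2real less_top)
  obtain K where K: "d - \<epsilon> < wt_fin (D \<inter> {..<K})"
  proof (cases "d - \<epsilon> < 0")
    case True then show ?thesis using that[of 0] by (simp add: wt_fin_def)
  next
    case False
    then have "ennreal (d - \<epsilon>) < (SUP n. ennreal (wt_fin (D \<inter> {..<n})))"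
      using assms(2) wD by (simp flip: wt_eq_SUP add: ennreal_less_iff)
    then obtain n where "ennreal (d - \<epsilon>) < ennreal (wt_fin (D \<inter> {..<n}))"
      by (auto simp: less_SUP_iff)
    then show ?thesis using that wt_fin_nonneg False by (auto simp: ennreal_less_iff)
  qed
  have "wt_fin (D \<inter> {K..} \<inter> {..<n}) \<le> \<epsilon>" for n
  proof -
    let ?F = "D \<inter> {K..} \<inter> {..<n}" and ?G = "D \<inter> {..<K}"
    have "wt_fin (?F \<union> ?G) = wt_fin ?F + wt_fin ?G"
      unfolding wt_fin_def by (rule sum.union_disjoint) auto
    moreover have "ennreal (wt_fin (?F \<union> ?G)) \<le> ennreal d"
      using wt_fin_le_wt[of "?F \<union> ?G" D] wD by auto
    ultimately show ?thesis using K d0 by simp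
  qed
  then show ?thesis using wt_le_ennrealI by blast
qed

lemma wt_fin_le_pow_iff:
  assumes "finite A" and "A \<subseteq> {..<n}"
  shows "(\<Sum>i\<in>A. (2::nat) ^ (n + J - fst (prod_decode i))) \<le> 2 ^ n \<longleftrightarrow> wt_fin A \<le> (1/2) ^ J"
proof -
  have "real ((2::nat) ^ (n + J - fst (prod_decode i))) = 2 ^ (n + J) * (1/2) ^ fst (prod_decode i)"
    if "i \<in> A" for i
  proof -
    have "fst (prod_decode i) \<le> i"
      using le_prod_encode_1[of "fst (prod_decode i)" "snd (prod_decode i)"] by simp
    then have "fst (prod_decode i) \<le> n + J" using assms(2) that by fastforce
    then have "(2::real) ^ (n + J) = 2 ^ (n + J - fst (prod_decode i)) * 2 ^ fst (prod_decode i)"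
      by (simp flip: power_add)
    then show ?thesis by (simp add: power_one_over field_simps)
  qed
  then have "real (\<Sum>i\<in>A. (2::nat) ^ (n + J - fst (prod_decode i))) = 2 ^ (n + J) * wt_fin A"
    unfolding of_nat_sum wt_fin_def sum_distrib_left by (rule sum.cong[OF refl])
  moreover have "(2::real) ^ (n + J) * (1/2) ^ J = 2 ^ n"
    by (simp add: power_add power_one_over)
  ultimately show ?thesis
    by (metis (mono_tags) mult_le_cancel_left_pos of_nat_le_iff of_nat_numeral of_nat_power
        zero_less_numeral zero_less_power)
qed

section \<open>Koenig's lemma and the weight hull\<close>

lemma koenig_binary:
  fixes P :: "nat \<Rightarrow> nat set \<Rightarrow> bool"
  assumes local: "\<And>n X Y. X \<inter> {..<n} = Y \<inter> {..<n} \<Longrightarrow> P n X \<Longrightarrow> P n Y"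
    and downward: "\<And>m n X. P n X \<Longrightarrow> m \<le> n \<Longrightarrow> P m X"
    and witness: "\<And>n. \<exists>X. P n X"
  shows "\<exists>X. \<forall>n. P n X"
proof -
  define E where "E m S \<longleftrightarrow> (\<forall>n\<ge>m. \<exists>X. P n X \<and> X \<inter> {..<m} = S)" for m S
  have step: "E (Suc m) S \<or> E (Suc m) (insert m S)" if "E m S" for m S
  proof (rule ccontr)
    assume "\<not> (E (Suc m) S \<or> E (Suc m) (insert m S))"
    then obtain n1 n2 where n1: "n1 \<ge> Suc m" "\<forall>X. P n1 X \<longrightarrow> X \<inter> {..<Suc m} \<noteq> S"
      and n2: "n2 \<ge> Suc m" "\<forall>X. P n2 X \<longrightarrow> X \<inter> {..<Suc m} \<noteq> insert m S"
      unfolding E_def by blast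
    have "m \<le> max n1 n2" using n1(1) by simp
    then obtain X where X: "P (max n1 n2) X" "X \<inter> {..<m} = S"
      using \<open>E m S\<close> unfolding E_def by blast
    then have "P n1 X" "P n2 X" by (auto intro: downward)
    moreover have "X \<inter> {..<Suc m} = (if m \<in> X then insert m S else S)"
      using X(2) by (auto simp: lessThan_Suc)
    ultimately show False using n1(2) n2(2) by (auto split: if_splits)
  qed
  define S where "S = rec_nat {} (\<lambda>m Sm. if E (Suc m) Sm then Sm else insert m Sm)"
  have E_S: "E m (S m)" for m
  proof (induction m)
    case 0 show ?case using witness by (auto simp: E_def S_def)
  next
    case (Suc m) then show ?case using step[OF Suc] by (auto simp: S_def)
  qed
  define X where "X = {i. i \<in> S (Suc i)}"
  have S_eq: "S m = X \<inter> {..<m}" for m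
  proof (induction m)
    case (Suc m)
    have "S (Suc m) = S m \<union> ({m} \<inter> S (Suc m))"
      by (auto simp: S_def)
    then show ?case using Suc by (auto simp: X_def lessThan_Suc)
  qed (simp add: S_def)
  have "P m X" for m
    using E_S[of m] local unfolding E_def S_eq by blast
  then show ?thesis by blast
qed

lemma prefix_of_cong:
  assumes "X \<inter> {..<n} = Y \<inter> {..<n}" and "j \<le> n"
  shows "prefix_of X j = prefix_of Y j"
  unfolding prefix_of_def
proof (rule map_cong[OF refl])
  fix i assume "i \<in> set [0..<j]"
  then have "i < n" using assms(2) by simp
  then show "(i \<in> X) = (i \<in> Y)" using assms(1) by blast
qed

lemma ex_set_iff_ex_bits:
  assumes "\<And>X Y. X \<inter> {..<n} = Y \<inter> {..<n} \<Longrightarrow> A X \<Longrightarrow> A Y"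
  shows "(\<exists>X. A X) \<longleftrightarrow> (\<exists>r<(2::nat) ^ n. A {i. bit r i})"
proof
  assume "\<exists>X. A X"
  then obtain X where "A X" by blast
  define r where "r = (horner_sum of_bool 2 (prefix_of X n) :: nat)"
  have "r < 2 ^ n"
    using horner_sum_of_bool_2_less[of "prefix_of X n"] by (simp add: r_def)
  moreover have "X \<inter> {..<n} = {i. bit r i} \<inter> {..<n}"
    by (auto simp: r_def bit_horner_sum_prefix_of)
  then have "A {i. bit r i}" using \<open>A X\<close> by (rule assms)
  ultimately show "\<exists>r<(2::nat) ^ n. A {i. bit r i}" by blast
qed blast

definition wt_hull :: "nat set set \<Rightarrow> real \<Rightarrow> nat set set" where
  "wt_hull Q \<delta> = {Z. \<exists>X\<in>Q. X \<subseteq> Z \<and> wt (Z - X) \<le> ennreal \<delta>}"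

definition hull_approx :: "nat set \<Rightarrow> real \<Rightarrow> nat \<Rightarrow> nat set \<Rightarrow> bool" where
  "hull_approx R \<delta> n S \<longleftrightarrow> (\<exists>X. (\<forall>j\<le>n. str_code (prefix_of X j) \<in> R) \<and>
     X \<inter> {..<n} \<subseteq> S \<and> wt_fin ((S - X) \<inter> {..<n}) \<le> \<delta>)"

lemma hull_approx_if_wt_hull:
  assumes Q: "Q = {X. \<forall>n. str_code (prefix_of X n) \<in> R}" and "0 \<le> \<delta>" and "Z \<in> wt_hull Q \<delta>"
  shows "hull_approx R \<delta> n (Z \<inter> {..<n})"
proof -
  obtain X where X: "X \<in> Q" "X \<subseteq> Z" "wt (Z - X) \<le> ennreal \<delta>"
    using assms(3) unfolding wt_hull_def by blast
  have "ennreal (wt_fin ((Z \<inter> {..<n} - X) \<inter> {..<n})) \<le> wt (Z - X)"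
    by (rule wt_fin_le_wt) auto
  also have "\<dots> \<le> ennreal \<delta>" by (fact X(3))
  finally have "wt_fin ((Z \<inter> {..<n} - X) \<inter> {..<n}) \<le> \<delta>"
    using \<open>0 \<le> \<delta>\<close> by (simp add: ennreal_le_iff)
  moreover have "\<forall>j\<le>n. str_code (prefix_of X j) \<in> R"
    using X(1) Q by blast
  moreover have "X \<inter> {..<n} \<subseteq> Z \<inter> {..<n}"
    using X(2) by blast
  ultimately show ?thesis unfolding hull_approx_def by blast
qed

lemma wt_hull_if_hull_approx:
  assumes Q: "Q = {X. \<forall>n. str_code (prefix_of X n) \<in> R}"
    and approx: "\<And>n. hull_approx R \<delta> n (Z \<inter> {..<n})"
  shows "Z \<in> wt_hull Q \<delta>"
proof -
  define P where "P n X \<longleftrightarrow> (\<forall>j\<le>n. str_code (prefix_of X j) \<in> R) \<and> X \<inter> {..<n} \<subseteq> Z \<and>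
    wt_fin ((Z - X) \<inter> {..<n}) \<le> \<delta>" for n X
  have "\<exists>X. \<forall>n. P n X"
  proof (rule koenig_binary)
    fix n X Y assume XY: "X \<inter> {..<n} = Y \<inter> {..<n}" and "P n X"
    moreover have "(Z - X) \<inter> {..<n} = (Z - Y) \<inter> {..<n}"
      using XY by blast
    moreover have "prefix_of X j = prefix_of Y j" if "j \<le> n" for j
      using XY that by (rule prefix_of_cong)
    ultimately show "P n Y" unfolding P_def by simp
  next
    fix m n X assume "P n X" "m \<le> n"
    moreover have "wt_fin ((Z - X) \<inter> {..<m}) \<le> wt_fin ((Z - X) \<inter> {..<n})"
      using \<open>m \<le> n\<close> by (intro wt_fin_mono) auto
    ultimately show "P m X" unfolding P_def by auto
  next
    fix n
    have "(Z \<inter> {..<n} - X) \<inter> {..<n} = (Z - X) \<inter> {..<n}" for X by blast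
    then show "\<exists>X. P n X" using approx[of n] unfolding hull_approx_def P_def by auto
  qed
  then obtain X where X: "P n X" for n by blast
  have "X \<in> Q" using X Q unfolding P_def by blast
  moreover have "X \<subseteq> Z"
  proof
    fix i assume "i \<in> X"
    then show "i \<in> Z" using X[of "Suc i"] unfolding P_def by blast
  qed
  moreover have "wt (Z - X) \<le> ennreal \<delta>"
    using X unfolding P_def by (intro wt_le_ennrealI) blast
  ultimately show ?thesis unfolding wt_hull_def by blast
qed

lemma wt_hull_eq_approx:
  assumes "Q = {X. \<forall>n. str_code (prefix_of X n) \<in> R}" and "0 \<le> \<delta>"
  shows "wt_hull Q \<delta> = {Z. \<forall>n. hull_approx R \<delta> n (Z \<inter> {..<n})}"
  using hull_approx_if_wt_hull[OF assms] wt_hull_if_hull_approx[OF assms(1)] by blast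

lemma str_code_prefix_of_bits: "str_code (prefix_of {i. bit r i} j) = 2 ^ j + r mod 2 ^ j"
  unfolding str_code_prefix_of by (simp add: prefix_of_def horner_sum_bit_eq_take_bit take_bit_eq_mod)

lemma hull_approx_iff_bits:
  "hull_approx R ((1/2) ^ J) n S \<longleftrightarrow>
    (\<exists>r<(2::nat) ^ n. (\<forall>j<Suc n. 2 ^ j + r mod 2 ^ j \<in> R) \<and> (\<forall>i<n. bit r i \<longrightarrow> i \<in> S) \<and>
       (\<Sum>i<n. of_bool (i \<in> S \<and> \<not> bit r i) * (2::nat) ^ (n + J - fst (prod_decode i))) \<le> 2 ^ n)"
proof -
  let ?A = "\<lambda>X. (\<forall>j\<le>n. str_code (prefix_of X j) \<in> R) \<and> X \<inter> {..<n} \<subseteq> S \<and>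
    wt_fin ((S - X) \<inter> {..<n}) \<le> (1/2) ^ J"
  have "hull_approx R ((1/2) ^ J) n S \<longleftrightarrow> (\<exists>r<(2::nat) ^ n. ?A {i. bit r i})"
    unfolding hull_approx_def
  proof (rule ex_set_iff_ex_bits)
    fix X Y assume XY: "X \<inter> {..<n} = Y \<inter> {..<n}" and "?A X"
    moreover have "(S - X) \<inter> {..<n} = (S - Y) \<inter> {..<n}"
      using XY by blast
    moreover have "prefix_of X j = prefix_of Y j" if "j \<le> n" for j
      using XY that by (rule prefix_of_cong)
    ultimately show "?A Y" by simp
  qed
  moreover have "?A {i. bit r i} \<longleftrightarrow> (\<forall>j<Suc n. 2 ^ j + r mod 2 ^ j \<in> R) \<and> (\<forall>i<n. bit r i \<longrightarrow> i \<in> S) \<and>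
       (\<Sum>i<n. of_bool (i \<in> S \<and> \<not> bit r i) * (2::nat) ^ (n + J - fst (prod_decode i))) \<le> 2 ^ n"
    for r :: nat
  proof -
    have "(\<Sum>i<n. of_bool (i \<in> S \<and> \<not> bit r i) * (2::nat) ^ (n + J - fst (prod_decode i))) =
        (\<Sum>i\<in>(S - {i. bit r i}) \<inter> {..<n}. 2 ^ (n + J - fst (prod_decode i)))"
      unfolding Int_commute[of "S - _" "{..<n}"] sum.inter_restrict[OF finite_lessThan]
      by (rule sum.cong) auto
    then show ?thesis
      using wt_fin_le_pow_iff[of "(S - {i. bit r i}) \<inter> {..<n}" n J]
      by (auto simp: str_code_prefix_of_bits less_Suc_eq_le)
  qed
  ultimately show ?thesis by simp
qed

lemma Pi01_class_wt_hull:
  assumes "Pi01_class Q"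
  shows "Pi01_class (wt_hull Q ((1/2) ^ J))"
proof -
  obtain R where R: "decidable_set R" and Q: "Q = {X. \<forall>n. str_code (prefix_of X n) \<in> R}"
    using assms unfolding Pi01_class_def by blast
  let ?\<Phi> = "\<lambda>c. \<exists>r<(2::nat) ^ floor_log c. (\<forall>j<Suc (floor_log c). 2 ^ j + r mod 2 ^ j \<in> R) \<and>
    (\<forall>i<floor_log c. bit r i \<longrightarrow> bit c i) \<and>
    (\<Sum>i<floor_log c. of_bool (bit c i \<and> \<not> bit r i) *
       (2::nat) ^ (floor_log c + J - fst (prod_decode i))) \<le> 2 ^ floor_log c"
  have "hull_approx R ((1/2) ^ J) (floor_log c) (code_set c) \<longleftrightarrow> ?\<Phi> c" for c
    unfolding hull_approx_iff_bits code_set_def by (simp cong: conj_cong)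
  moreover have "decidable_set {c. ?\<Phi> c}"
    unfolding decidable_set_iff_recursive mem_Collect_eq
    by (rule recursive_intros recursive_floor_log recursive_fst_prod_decode recursive_tl
        recursive_mem[OF R] | simp)+
  ultimately have "Pi01_class {Z. \<forall>n. hull_approx R ((1/2) ^ J) n (Z \<inter> {..<n})}"
    by (intro Pi01_classI) simp
  then show ?thesis using wt_hull_eq_approx[OF Q] by simp
qed

lemma computable_real_diff_pow:
  assumes "computable_real a"
  shows "computable_real (a - (1/2) ^ J)"
proof -
  obtain f g h where "computable f" "computable g" "computable h"
    and approx: "\<forall>n. \<bar>a - (real (f n) - real (g n)) / real (h n + 1)\<bar> \<le> 1 / 2 ^ n"
    using assms unfolding computable_real_def by blast
  then have rf: "recursive 1 (\<lambda>xs. f (hd xs))" and rg: "recursive 1 (\<lambda>xs. g (hd xs))"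
    and rh: "recursive 1 (\<lambda>xs. h (hd xs))"
    by (simp_all add: computable_iff_recursive)
  (* with P = 2^J: (f - g) / (h + 1) - 1 / P = (P f - (P g + h + 1)) / (P (h + 1)) *)
  define P where "P = (2::nat) ^ J"
  define f' where "f' n = P * f n" for n
  define g' where "g' n = P * g n + (h n + 1)" for n
  define h' where "h' n = P * (h n + 1) - 1" for n
  have "computable f'" "computable g'" "computable h'"
    unfolding computable_iff_recursive f'_def g'_def h'_def
    by (intro recursive_intros rf rg rh)+
  moreover have "\<bar>(a - (1/2) ^ J) - (real (f' n) - real (g' n)) / real (h' n + 1)\<bar> \<le> 1 / 2 ^ n" for n
  proof -
    have "real (h' n + 1) = real P * real (h n + 1)"
      unfolding h'_def P_def by (simp add: of_nat_diff Suc_le_eq algebra_simps)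
    moreover have "real (f' n) - real (g' n) = real P * (real (f n) - real (g n)) - real (h n + 1)"
      unfolding f'_def g'_def by (simp add: algebra_simps)
    moreover have "real P = 2 ^ J" unfolding P_def by simp
    ultimately have "(real (f' n) - real (g' n)) / real (h' n + 1) =
        (real (f n) - real (g n)) / real (h n + 1) - (1/2) ^ J"
      by (simp add: field_simps)
    then show ?thesis using approx by simp
  qed
  ultimately show ?thesis unfolding computable_real_def by blast
qed

lemma enn2ereal_le_ereal_iff: "0 \<le> c \<Longrightarrow> enn2ereal x \<le> ereal c \<longleftrightarrow> x \<le> ennreal c"
  by (metis enn2ereal_ennreal less_eq_ennreal.rep_eq)

lemma condition_weight_gap:
  assumes "is_condition \<tau> Q a"
  shows "\<exists>J. \<forall>X\<in>Q. wt_fin (strset \<tau> - X) + (1/2) ^ J < a"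
proof -
  have fin: "finite (strset \<tau>)" by (simp add: strset_def)
  have below: "wt_fin (strset \<tau> - X) < a" if "X \<in> Q" for X
    using assms that fin wt_eq_wt_fin[of "strset \<tau> - X"] wt_fin_nonneg
    by (auto simp: is_condition_def)
  define V where "V = insert (a - 1) ((\<lambda>X. wt_fin (strset \<tau> - X)) ` Q)"
  have "finite V"
    using finite_subset[of "(\<lambda>X. wt_fin (strset \<tau> - X)) ` Q" "wt_fin ` Pow (strset \<tau>)"] fin
    unfolding V_def by auto
  then have "Max V < a" using below by (auto simp: V_def)
  then obtain J where "(1/2) ^ J < a - Max V"
    using real_arch_pow_inv[of "a - Max V" "1/2"] by auto
  moreover have "wt_fin (strset \<tau> - X) \<le> Max V" if "X \<in> Q" for X
    using \<open>finite V\<close> that by (auto simp: V_def)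
  ultimately have "\<forall>X\<in>Q. wt_fin (strset \<tau> - X) + (1/2) ^ J < a" by fastforce
  then show ?thesis ..
qed

lemma candidates_subset_wt_hull:
  assumes "Q' \<subseteq> wt_hull Q \<delta>" and "0 \<le> \<delta>"
  shows "candidates \<tau> Q' (a - \<delta>) \<subseteq> candidates \<tau> Q a"
proof
  fix Y assume "Y \<in> candidates \<tau> Q' (a - \<delta>)"
  then obtain Z where Y: "extends_str Y \<tau>" "Z \<in> Q'" "Z \<subseteq> Y" "enn2ereal (wt (Y - Z)) \<le> ereal (a - \<delta>)"
    unfolding candidates_def by blast
  then obtain X where X: "X \<in> Q" "X \<subseteq> Z" "wt (Z - X) \<le> ennreal \<delta>"
    using assms(1) unfolding wt_hull_def by blast
  have "0 \<le> a - \<delta>" using order_trans[OF enn2ereal_nonneg Y(4)] by simp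
  then have "wt (Y - Z) \<le> ennreal (a - \<delta>)" using Y(4) enn2ereal_le_ereal_iff by blast
  have "wt (Y - X) \<le> wt ((Y - Z) \<union> (Z - X))" by (rule wt_mono) auto
  also have "\<dots> \<le> wt (Y - Z) + wt (Z - X)" by (rule wt_union)
  also have "\<dots> \<le> ennreal (a - \<delta>) + ennreal \<delta>" by (rule add_mono) fact+
  also have "\<dots> = ennreal a" using \<open>0 \<le> a - \<delta>\<close> assms(2) by (simp flip: ennreal_plus)
  finally have "enn2ereal (wt (Y - X)) \<le> ereal a"
    using \<open>0 \<le> a - \<delta>\<close> assms(2) enn2ereal_le_ereal_iff[of a] by simp
  then show "Y \<in> candidates \<tau> Q a" unfolding candidates_def using Y X by blast
qed

lemma is_condition_refine:
  fixes J K :: nat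
  defines "\<delta> \<equiv> (1/2) ^ J :: real"
  assumes cond: "is_condition \<tau> Q a" and gap: "\<forall>X\<in>Q. wt_fin (strset \<tau> - X) + \<delta> < a"
    and "ce D" and tail: "wt (D \<inter> {K..}) \<le> ennreal \<delta>" and "length \<tau> \<le> K"
  shows "is_condition \<tau>
    (wt_hull Q \<delta> \<inter> {Z. Z \<inter> {..<length \<tau>} \<subseteq> strset \<tau>} \<inter> {Z. D \<inter> {K..} \<subseteq> Z}) (a - \<delta>)"
    (is "is_condition \<tau> ?Q' _")
  unfolding is_condition_def
proof (intro conjI ballI)
  show "Pi01_class ?Q'"
    using cond \<open>ce D\<close> unfolding is_condition_def \<delta>_def
    by (intro Pi01_class_Int Pi01_class_wt_hull Pi01_class_below_subset Pi01_class_superset_ce)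
       (auto simp: strset_def)
  obtain X0 where X0: "X0 \<in> Q" "wt X0 < \<infinity>"
    using cond by (auto simp: is_condition_def wt_class_def INF_less_iff)
  have "X0 \<union> D \<inter> {K..} \<in> ?Q'"
  proof -
    have "wt (X0 \<union> D \<inter> {K..} - X0) \<le> wt (D \<inter> {K..})" by (rule wt_mono) blast
    then have "wt (X0 \<union> D \<inter> {K..} - X0) \<le> ennreal \<delta>" using tail by (rule order_trans)
    moreover have "X0 \<inter> {..<length \<tau>} \<subseteq> strset \<tau>"
      using cond X0(1) by (auto simp: is_condition_def)
    ultimately show ?thesis
      using X0(1) \<open>length \<tau> \<le> K\<close> unfolding wt_hull_def by auto
  qed
  then have "wt_class ?Q' \<le> wt (X0 \<union> D \<inter> {K..})"
    unfolding wt_class_def by (rule INF_lower)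
  also have "\<dots> \<le> wt X0 + wt (D \<inter> {K..})" by (rule wt_union)
  also have "\<dots> < \<infinity>" using X0(2) tail by (simp add: le_less_trans)
  finally show "wt_class ?Q' < \<infinity>" .
  show "computable_real (a - \<delta>)"
    using cond unfolding is_condition_def \<delta>_def by (simp add: computable_real_diff_pow)
  fix Z assume "Z \<in> ?Q'"
  then show "Z \<inter> {..<length \<tau>} \<subseteq> strset \<tau>" by blast
  obtain X where "X \<in> Q" "X \<subseteq> Z"
    using \<open>Z \<in> ?Q'\<close> unfolding wt_hull_def by blast
  then have "wt_fin (strset \<tau> - Z) < a - \<delta>"
    using gap wt_fin_mono[of "strset \<tau> - X" "strset \<tau> - Z"] by (force simp: strset_def)
  then show "enn2ereal (wt (strset \<tau> - Z)) < ereal (a - \<delta>)"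
    using wt_fin_nonneg by (simp add: wt_eq_wt_fin strset_def)
qed

theorem lemma2p5:
  fixes \<tau> :: "bool list" and Q :: "nat set set" and a :: real and D :: "nat set"
  assumes "is_condition \<tau> Q a"
    and "ce D"
    and "wt D < \<infinity>"
  shows "\<exists>Q' a'. is_condition \<tau> Q' a' \<and> candidates \<tau> Q' a' \<subseteq> candidates \<tau> Q a \<and>
           (\<forall>Y\<in>candidates \<tau> Q' a'. finite (D - Y))"
proof -
  obtain J where gap: "\<forall>X\<in>Q. wt_fin (strset \<tau> - X) + (1/2) ^ J < a"
    using condition_weight_gap[OF assms(1)] by blast
  obtain K0 where "wt (D \<inter> {K0..}) \<le> ennreal ((1/2) ^ J)"
    using wt_tail_small[OF assms(3)] by fastforce
  define K where "K = max K0 (length \<tau>)"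
  have tail: "wt (D \<inter> {K..}) \<le> ennreal ((1/2) ^ J)"
    using \<open>wt (D \<inter> {K0..}) \<le> _\<close> by (rule order_trans[rotated]) (auto intro: wt_mono simp: K_def)
  define Q' where "Q' = wt_hull Q ((1/2) ^ J) \<inter> {Z. Z \<inter> {..<length \<tau>} \<subseteq> strset \<tau>} \<inter>
    {Z. D \<inter> {K..} \<subseteq> Z}"
  have "is_condition \<tau> Q' (a - (1/2) ^ J)"
    unfolding Q'_def using assms(1,2) gap tail by (intro is_condition_refine) (auto simp: K_def)
  moreover have "candidates \<tau> Q' (a - (1/2) ^ J) \<subseteq> candidates \<tau> Q a"
    unfolding Q'_def by (rule candidates_subset_wt_hull) auto
  moreover have "finite (D - Y)" if Y: "Y \<in> candidates \<tau> Q' (a - (1/2) ^ J)" for Y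
  proof -
    obtain Z where "Z \<in> Q'" "Z \<subseteq> Y" using Y unfolding candidates_def by blast
    then have "D - Y \<subseteq> {..<K}" unfolding Q'_def by (auto simp: not_less[symmetric])
    then show ?thesis by (rule finite_subset) simp
  qed
  ultimately show ?thesis by blast
qed

end
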